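(* Let $(\Omega,\Sigma,\mu)$ be a finite measure space and let $X(\mu)$ be a Banach strictly rectangular function space with the subsequence property. Then: (i) If $h\in L^\infty(\mu)$ and $f\in X(\mu)$, then $hf\in X(\mu)$, $\||hf|\|\le\|h\|_\infty\||f|\|$ and $\|hf\|\le 4\|h\|_\infty\|f\|$. (ii) $X(\mu)$ is an ideal in $L^0(\mu)$: if $f\in L^0(\mu)$, $g\in X(\mu)$ and $|f|\le|g|$, then $f\in X(\mu)$. (iii) The norm of $X(\mu)$ is monotone, i.e. there is $C>0$ with $\|f\|\le C\|g\|$ whenever $f,g\in X(\mu)$, $0\le f\le g$; for such $C$, $\||g|-|h|\|\le 4C\|g-h\|$ for all $g,h\in X(\mu)$; and the map $V:X(\mu)\to X(\mu)$, $V(f)=|f|$, is continuous. (iv) $\|f\|_V:=\||f|\|$, $f\in X(\mu)$, defines a norm on $X(\mu)$ equivalent to $\|\cdot\|$, which coincides with $\|\cdot\|$ on $X(\mu)^+=\{f\in X(\mu):f\ge0\}$, and $(X(\mu),\|\cdot\|_V)$ is a Banach function space.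
   Context: $L^0(\mu)$ is the space of equivalence classes (modulo $\mu$-a.e. equality) of real $\Sigma$-measurable functions, ordered $\mu$-a.e. A Banach strictly rectangular function space is a vector subspace $X(\mu)\subseteq L^0(\mu)$ with a complete norm such that $\chi_Af\in X(\mu)$ and $\|\chi_Af\|\le\|f\|$ for all $f\in X(\mu)$, $A\in\Sigma$. Subsequence property: whenever $f_n,f\in X(\mu)$ and $f_n\to f$ in norm, some subsequence converges to $f$ $\mu$-a.e. A Banach function space is a vector subspace of $L^0(\mu)$ with a complete norm which is an ideal of $L^0(\mu)$ (if $f\in L^0(\mu)$, $g$ in the space, $|f|\le|g|$, then $f$ is in the space) and whose norm is a Riesz norm ($|f|\le|g|$ implies $\|f\|\le\|g\|$). *)

theory Defs
  imports "HOL-Probability.Probability"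
begin

text \<open>Modelling of L0(mu): elements are real measurable functions; a subspace X of L0(mu)
 is modelled as a set of measurable functions that is saturated under a.e. equality,
 and a norm on it is a function N that is invariant under a.e. equality.
 The order of L0(mu) is the a.e. order.\<close>

definition ae_compatible :: "'a measure \<Rightarrow> ('a \<Rightarrow> real) set \<Rightarrow> (('a \<Rightarrow> real) \<Rightarrow> real) \<Rightarrow> bool" where
  "ae_compatible M X N \<longleftrightarrow> X \<subseteq> borel_measurable M \<and>
     (\<forall>f g. f \<in> X \<and> g \<in> borel_measurable M \<and> (AE x in M. f x = g x) \<longrightarrow> g \<in> X \<and> N g = N f)"

definition vector_subspace_L0 :: "'a measure \<Rightarrow> ('a \<Rightarrow> real) set \<Rightarrow> bool" where
  "vector_subspace_L0 M X \<longleftrightarrow> (\<lambda>x. 0) \<in> X \<and>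
     (\<forall>f\<in>X. \<forall>g\<in>X. (\<lambda>x. f x + g x) \<in> X) \<and>
     (\<forall>f\<in>X. \<forall>c::real. (\<lambda>x. c * f x) \<in> X)"

definition is_norm_on :: "'a measure \<Rightarrow> ('a \<Rightarrow> real) set \<Rightarrow> (('a \<Rightarrow> real) \<Rightarrow> real) \<Rightarrow> bool" where
  "is_norm_on M X N \<longleftrightarrow>
     (\<forall>f\<in>X. 0 \<le> N f) \<and>
     (\<forall>f\<in>X. N f = 0 \<longleftrightarrow> (AE x in M. f x = 0)) \<and>
     (\<forall>f\<in>X. \<forall>c::real. N (\<lambda>x. c * f x) = \<bar>c\<bar> * N f) \<and>
     (\<forall>f\<in>X. \<forall>g\<in>X. N (\<lambda>x. f x + g x) \<le> N f + N g)"

definition complete_wrt :: "('a \<Rightarrow> real) set \<Rightarrow> (('a \<Rightarrow> real) \<Rightarrow> real) \<Rightarrow> bool" where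
  "complete_wrt X N \<longleftrightarrow>
     (\<forall>s::nat \<Rightarrow> 'a \<Rightarrow> real. (\<forall>n. s n \<in> X) \<and>
        (\<forall>e>0. \<exists>K. \<forall>m\<ge>K. \<forall>n\<ge>K. N (\<lambda>x. s m x - s n x) < e) \<longrightarrow>
        (\<exists>f\<in>X. (\<lambda>n. N (\<lambda>x. s n x - f x)) \<longlonglongrightarrow> 0))"

definition banach_subspace_L0 :: "'a measure \<Rightarrow> ('a \<Rightarrow> real) set \<Rightarrow> (('a \<Rightarrow> real) \<Rightarrow> real) \<Rightarrow> bool" where
  "banach_subspace_L0 M X N \<longleftrightarrow> ae_compatible M X N \<and> vector_subspace_L0 M X \<and>
     is_norm_on M X N \<and> complete_wrt X N"

definition banach_strictly_rectangular :: "'a measure \<Rightarrow> ('a \<Rightarrow> real) set \<Rightarrow> (('a \<Rightarrow> real) \<Rightarrow> real) \<Rightarrow> bool" where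
  "banach_strictly_rectangular M X N \<longleftrightarrow> banach_subspace_L0 M X N \<and>
     (\<forall>f\<in>X. \<forall>A\<in>sets M. (\<lambda>x. indicator A x * f x) \<in> X \<and> N (\<lambda>x. indicator A x * f x) \<le> N f)"

definition subsequence_property :: "'a measure \<Rightarrow> ('a \<Rightarrow> real) set \<Rightarrow> (('a \<Rightarrow> real) \<Rightarrow> real) \<Rightarrow> bool" where
  "subsequence_property M X N \<longleftrightarrow>
     (\<forall>s::nat \<Rightarrow> 'a \<Rightarrow> real. \<forall>f. (\<forall>n. s n \<in> X) \<and> f \<in> X \<and> (\<lambda>n. N (\<lambda>x. s n x - f x)) \<longlonglongrightarrow> 0 \<longrightarrow>
        (\<exists>r. strict_mono r \<and> (AE x in M. (\<lambda>n. s (r n) x) \<longlonglongrightarrow> f x)))"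

definition ideal_L0 :: "'a measure \<Rightarrow> ('a \<Rightarrow> real) set \<Rightarrow> bool" where
  "ideal_L0 M X \<longleftrightarrow> (\<forall>f g. f \<in> borel_measurable M \<and> g \<in> X \<and> (AE x in M. \<bar>f x\<bar> \<le> \<bar>g x\<bar>) \<longrightarrow> f \<in> X)"

definition riesz_norm :: "'a measure \<Rightarrow> ('a \<Rightarrow> real) set \<Rightarrow> (('a \<Rightarrow> real) \<Rightarrow> real) \<Rightarrow> bool" where
  "riesz_norm M X N \<longleftrightarrow> (\<forall>f\<in>X. \<forall>g\<in>X. (AE x in M. \<bar>f x\<bar> \<le> \<bar>g x\<bar>) \<longrightarrow> N f \<le> N g)"

definition banach_function_space :: "'a measure \<Rightarrow> ('a \<Rightarrow> real) set \<Rightarrow> (('a \<Rightarrow> real) \<Rightarrow> real) \<Rightarrow> bool" where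
  "banach_function_space M X N \<longleftrightarrow> banach_subspace_L0 M X N \<and> ideal_L0 M X \<and> riesz_norm M X N"

definition Linf :: "'a measure \<Rightarrow> ('a \<Rightarrow> real) set" where
  "Linf M = {h \<in> borel_measurable M. esssup M (\<lambda>x. ereal \<bar>h x\<bar>) < \<infinity>}"

definition Linf_norm :: "'a measure \<Rightarrow> ('a \<Rightarrow> real) \<Rightarrow> real" where
  "Linf_norm M h = real_of_ereal (max 0 (esssup M (\<lambda>x. ereal \<bar>h x\<bar>)))"

end

theory Submission
  imports Defs
begin

text \<open>For measurable \<open>\<psi>\<close> with \<open>0 \<le> \<psi> < 1\<close> and \<open>g \<in> X\<close>, write
  \<open>\<psi> g = \<Sum>\<^sub>k 2\<^sup>-\<^sup>k\<^sup>-\<^sup>1 \<chi>\<^bsub>B\<^sub>k\<^esub> g\<close>, where \<open>B\<^sub>k\<close> is the set on which the \<open>(k+1)\<close>-st binary digit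
  of \<open>\<psi>\<close> is \<open>1\<close>. Strict rectangularity bounds the \<open>k\<close>-th term by \<open>2\<^sup>-\<^sup>k\<^sup>-\<^sup>1 \<parallel>g\<parallel>\<close>, so by
  completeness the partial sums converge in norm, and the subsequence property identifies the norm
  limit with their pointwise limit \<open>\<psi> g\<close>; hence \<open>\<psi> g \<in> X\<close> and \<open>\<parallel>\<psi> g\<parallel> \<le> \<parallel>g\<parallel>\<close>. Scaling extends
  this to \<open>0 \<le> \<psi> \<le> 1\<close>. Writing \<open>f = (f/g) g\<close> and splitting \<open>f/g\<close> into positive and negative
  parts gives \<open>f \<in> X\<close> with \<open>\<parallel>f\<parallel> \<le> \<parallel>g\<parallel>\<close> if \<open>0 \<le> f \<le> g\<close>, and \<open>\<parallel>f\<parallel> \<le> 2 \<parallel>g\<parallel>\<close> if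
  \<open>|f| \<le> |g|\<close>; all parts of the theorem follow from these two estimates.\<close>

lemma floor_double_eq:
  fixes y :: real
  shows "real_of_int \<lfloor>2 * y\<rfloor> = 2 * real_of_int \<lfloor>y\<rfloor> + of_bool (odd \<lfloor>2 * y\<rfloor>)"
proof -
  let ?a = "\<lfloor>2 * y\<rfloor>"
  have "\<lfloor>y\<rfloor> = ?a div 2"
    using floor_divide_real_eq_div[of 2 "2 * y"] by simp
  then have "?a = 2 * \<lfloor>y\<rfloor> + of_bool (odd ?a)"
    using div_mult_mod_eq[of ?a 2] by (simp add: mod_2_eq_odd)
  then have "real_of_int ?a = real_of_int (2 * \<lfloor>y\<rfloor> + of_bool (odd ?a))"
    by (rule arg_cong)
  then show ?thesis by simp
qed

lemma binary_digits_sum: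
  fixes t :: real
  assumes "0 \<le> t" "t < 1"
  shows "(\<Sum>k<n. of_bool (odd \<lfloor>2 ^ Suc k * t\<rfloor>) / 2 ^ Suc k) = real_of_int \<lfloor>2 ^ n * t\<rfloor> / 2 ^ n"
proof -
  have "of_bool (odd \<lfloor>2 ^ Suc k * t\<rfloor>) / 2 ^ Suc k
      = real_of_int \<lfloor>2 ^ Suc k * t\<rfloor> / 2 ^ Suc k - real_of_int \<lfloor>2 ^ k * t\<rfloor> / 2 ^ k" for k
    using floor_double_eq[of "2 ^ k * t"] by (simp add: field_simps)
  then have "(\<Sum>k<n. of_bool (odd \<lfloor>2 ^ Suc k * t\<rfloor>) / 2 ^ Suc k)
      = real_of_int \<lfloor>2 ^ n * t\<rfloor> / 2 ^ n - real_of_int \<lfloor>t\<rfloor>"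
    using sum_lessThan_telescope[of "\<lambda>k. real_of_int \<lfloor>2 ^ k * t\<rfloor> / 2 ^ k" n] by simp
  also have "\<lfloor>t\<rfloor> = 0" using assms by (simp add: floor_eq_iff)
  finally show ?thesis by simp
qed

lemma dyadic_floor_tendsto: "(\<lambda>n. real_of_int \<lfloor>2 ^ n * t\<rfloor> / 2 ^ n) \<longlonglongrightarrow> (t::real)"
proof (rule tendsto_sandwich)
  have "t - 1 / 2 ^ n \<le> real_of_int \<lfloor>2 ^ n * t\<rfloor> / 2 ^ n \<and> real_of_int \<lfloor>2 ^ n * t\<rfloor> / 2 ^ n \<le> t" for n
  proof -
    have "2 ^ n * t - 1 \<le> real_of_int \<lfloor>2 ^ n * t\<rfloor>" "real_of_int \<lfloor>2 ^ n * t\<rfloor> \<le> 2 ^ n * t"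
      by linarith+
    then show ?thesis by (simp add: le_divide_eq divide_le_eq algebra_simps)
  qed
  then show "\<forall>\<^sub>F n in sequentially. t - (1/2) ^ n \<le> real_of_int \<lfloor>2 ^ n * t\<rfloor> / 2 ^ n"
    "\<forall>\<^sub>F n in sequentially. real_of_int \<lfloor>2 ^ n * t\<rfloor> / 2 ^ n \<le> t"
    by (simp_all add: power_one_over)
  show "(\<lambda>n. t - (1/2) ^ n) \<longlonglongrightarrow> t"
    using tendsto_diff[OF tendsto_const LIMSEQ_realpow_zero[of "1/2::real"]] by simp
qed simp

lemma Linf_AE_abs_le:
  assumes "h \<in> Linf M"
  shows "h \<in> borel_measurable M \<and> 0 \<le> Linf_norm M h \<and> (AE x in M. \<bar>h x\<bar> \<le> Linf_norm M h)"
proof -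
  let ?E = "esssup M (\<lambda>x. ereal \<bar>h x\<bar>)"
  have hm: "h \<in> borel_measurable M" and E: "?E < \<infinity>" using assms by (auto simp: Linf_def)
  have fin: "max 0 ?E = ereal (Linf_norm M h)" unfolding Linf_norm_def
    using E by (cases "max 0 ?E") (auto simp: max_def split: if_splits)
  have c0: "0 \<le> Linf_norm M h" using fin by (metis ereal_less_eq(5) max.cobounded1)
  have "AE x in M. ereal \<bar>h x\<bar> \<le> ?E" by (rule esssup_AE)
  then have "AE x in M. \<bar>h x\<bar> \<le> Linf_norm M h"
  proof eventually_elim
    case (elim x)
    have "ereal \<bar>h x\<bar> \<le> max 0 ?E" using elim by (simp add: le_max_iff_disj)
    then show ?case unfolding fin by simp
  qed
  with hm c0 show ?thesis by simp
qed

locale strictly_rectangular_space =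
  fixes M :: "'a measure" and X :: "('a \<Rightarrow> real) set" and N :: "('a \<Rightarrow> real) \<Rightarrow> real"
  assumes strictly_rectangular: "banach_strictly_rectangular M X N"
    and subsequence: "subsequence_property M X N"
begin

lemma mem_measurable: "f \<in> X \<Longrightarrow> f \<in> borel_measurable M"
  using strictly_rectangular
  unfolding banach_strictly_rectangular_def banach_subspace_L0_def ae_compatible_def by blast

lemma mem_AE_cong:
  "f \<in> X \<Longrightarrow> g \<in> borel_measurable M \<Longrightarrow> (AE x in M. f x = g x) \<Longrightarrow> g \<in> X \<and> N g = N f"
  using strictly_rectangular
  unfolding banach_strictly_rectangular_def banach_subspace_L0_def ae_compatible_def by blast

lemma zero_mem: "(\<lambda>x. 0) \<in> X"
  and add_mem: "f \<in> X \<Longrightarrow> g \<in> X \<Longrightarrow> (\<lambda>x. f x + g x) \<in> X"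
  and mult_mem: "f \<in> X \<Longrightarrow> (\<lambda>x. c * f x) \<in> X"
  using strictly_rectangular
  unfolding banach_strictly_rectangular_def banach_subspace_L0_def vector_subspace_L0_def by blast+

lemma N_nonneg: "f \<in> X \<Longrightarrow> 0 \<le> N f"
  and N_eq_0_iff: "f \<in> X \<Longrightarrow> N f = 0 \<longleftrightarrow> (AE x in M. f x = 0)"
  and N_mult: "f \<in> X \<Longrightarrow> N (\<lambda>x. c * f x) = \<bar>c\<bar> * N f"
  and N_triangle: "f \<in> X \<Longrightarrow> g \<in> X \<Longrightarrow> N (\<lambda>x. f x + g x) \<le> N f + N g"
  using strictly_rectangular
  unfolding banach_strictly_rectangular_def banach_subspace_L0_def is_norm_on_def by blast+

lemma complete: "complete_wrt X N"
  using strictly_rectangular unfolding banach_strictly_rectangular_def banach_subspace_L0_def by blast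

lemma indicator_mult_mem:
  "f \<in> X \<Longrightarrow> A \<in> sets M \<Longrightarrow> (\<lambda>x. indicator A x * f x) \<in> X \<and> N (\<lambda>x. indicator A x * f x) \<le> N f"
  using strictly_rectangular unfolding banach_strictly_rectangular_def by blast

lemma N_zero: "N (\<lambda>x. 0) = 0"
  using N_eq_0_iff[OF zero_mem] by simp

lemma diff_mem: "f \<in> X \<Longrightarrow> g \<in> X \<Longrightarrow> (\<lambda>x. f x - g x) \<in> X"
  using add_mem[of f "\<lambda>x. (-1) * g x"] mult_mem[of g "-1"] by simp

lemma N_diff_commute: "f \<in> X \<Longrightarrow> g \<in> X \<Longrightarrow> N (\<lambda>x. f x - g x) = N (\<lambda>x. g x - f x)"
  using N_mult[OF diff_mem, of g f "-1"] by simp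

lemma N_diff_le: "f \<in> X \<Longrightarrow> g \<in> X \<Longrightarrow> N (\<lambda>x. f x - g x) \<le> N f + N g"
  using N_triangle[OF _ mult_mem, of f g "-1"] N_mult[of g "-1"] by simp

lemma sum_mem_N_sum_le:
  assumes "finite A" and "\<And>k. k \<in> A \<Longrightarrow> u k \<in> X"
  shows "(\<lambda>x. \<Sum>k\<in>A. u k x) \<in> X \<and> N (\<lambda>x. \<Sum>k\<in>A. u k x) \<le> (\<Sum>k\<in>A. N (u k))"
  using assms
proof (induction A rule: finite_induct)
  case empty
  show ?case by (simp add: zero_mem N_zero)
next
  case (insert k A)
  then have IH: "(\<lambda>x. \<Sum>k\<in>A. u k x) \<in> X" "N (\<lambda>x. \<Sum>k\<in>A. u k x) \<le> (\<Sum>k\<in>A. N (u k))"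
    and uk: "u k \<in> X" by auto
  have "N (\<lambda>x. u k x + (\<Sum>k\<in>A. u k x)) \<le> N (u k) + N (\<lambda>x. \<Sum>k\<in>A. u k x)"
    by (rule N_triangle[OF uk IH(1)])
  with IH uk insert.hyps show ?case by (simp add: add_mem)
qed

lemma partial_sums_Cauchy:
  assumes u: "\<And>k. u k \<in> X" and b: "\<And>k. N (u k) \<le> b k" and "summable b"
  shows "\<forall>e>0. \<exists>K. \<forall>m\<ge>K. \<forall>n\<ge>K. N (\<lambda>x. (\<Sum>k<m. u k x) - (\<Sum>k<n. u k x)) < e"
proof (intro allI impI)
  have tail: "N (\<lambda>x. (\<Sum>k<m. u k x) - (\<Sum>k<n. u k x)) \<le> sum b {n..<m}" if "n \<le> m" for m n
  proof -
    have "(\<lambda>x. (\<Sum>k<m. u k x) - (\<Sum>k<n. u k x)) = (\<lambda>x. \<Sum>k\<in>{n..<m}. u k x)"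
      using that by (simp add: lessThan_atLeast0 sum_diff_nat_ivl)
    then have "N (\<lambda>x. (\<Sum>k<m. u k x) - (\<Sum>k<n. u k x)) \<le> (\<Sum>k\<in>{n..<m}. N (u k))"
      using sum_mem_N_sum_le[of "{n..<m}" u] u by simp
    also have "\<dots> \<le> sum b {n..<m}" by (intro sum_mono b)
    finally show ?thesis .
  qed
  fix e :: real
  assume "0 < e"
  then obtain K where K: "\<forall>m\<ge>K. \<forall>n. norm (sum b {m..<n}) < e"
    using \<open>summable b\<close> unfolding summable_Cauchy by blast
  have lt: "N (\<lambda>x. (\<Sum>k<m. u k x) - (\<Sum>k<n. u k x)) < e" if "K \<le> n" "n \<le> m" for m n
    using tail[OF \<open>n \<le> m\<close>] K[rule_format, OF \<open>K \<le> n\<close>, of m]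
    unfolding real_norm_def abs_less_iff by linarith
  have S: "(\<lambda>x. \<Sum>k<n. u k x) \<in> X" for n
    using sum_mem_N_sum_le[of "{..<n}" u] u by simp
  show "\<exists>K. \<forall>m\<ge>K. \<forall>n\<ge>K. N (\<lambda>x. (\<Sum>k<m. u k x) - (\<Sum>k<n. u k x)) < e"
  proof (intro exI allI impI)
    fix m n assume "K \<le> m" "K \<le> n"
    show "N (\<lambda>x. (\<Sum>k<m. u k x) - (\<Sum>k<n. u k x)) < e"
    proof (cases "n \<le> m")
      case True
      then show ?thesis using lt \<open>K \<le> n\<close> by blast
    next
      case False
      then have "N (\<lambda>x. (\<Sum>k<n. u k x) - (\<Sum>k<m. u k x)) < e" using lt \<open>K \<le> m\<close> by simp
      then show ?thesis using N_diff_commute[OF S S, of m n] by simp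
    qed
  qed
qed

lemma series_mem_N_le:
  assumes u: "\<And>k. u k \<in> X" and b: "\<And>k. N (u k) \<le> b k" and "summable b"
    and F: "F \<in> borel_measurable M"
    and lim: "AE x in M. (\<lambda>n. \<Sum>k<n. u k x) \<longlonglongrightarrow> F x"
  shows "F \<in> X \<and> N F \<le> suminf b"
proof -
  define S where "S n = (\<lambda>x. \<Sum>k<n. u k x)" for n
  have SX: "S n \<in> X" and NS: "N (S n) \<le> suminf b" for n
  proof -
    have "S n \<in> X" "N (S n) \<le> (\<Sum>k<n. N (u k))"
      using sum_mem_N_sum_le[of "{..<n}" u] u by (auto simp: S_def)
    moreover have "(\<Sum>k<n. N (u k)) \<le> sum b {..<n}" by (intro sum_mono b)
    moreover have "sum b {..<n} \<le> suminf b"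
      using \<open>summable b\<close> by (rule sum_le_suminf) (auto intro: order_trans[OF N_nonneg[OF u] b])
    ultimately show "S n \<in> X" "N (S n) \<le> suminf b" by auto
  qed
  have "\<forall>e>0. \<exists>K. \<forall>m\<ge>K. \<forall>n\<ge>K. N (\<lambda>x. S m x - S n x) < e"
    using partial_sums_Cauchy[OF u b \<open>summable b\<close>] by (simp add: S_def)
  then obtain l where l: "l \<in> X" and Sl: "(\<lambda>n. N (\<lambda>x. S n x - l x)) \<longlonglongrightarrow> 0"
    using complete SX unfolding complete_wrt_def by blast
  obtain r where r: "strict_mono r" and Srl: "AE x in M. (\<lambda>n. S (r n) x) \<longlonglongrightarrow> l x"
    using subsequence l Sl SX unfolding subsequence_property_def by blast
  from lim Srl have "AE x in M. l x = F x"
  proof eventually_elim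
    case (elim x)
    then have "(\<lambda>n. S (r n) x) \<longlonglongrightarrow> F x"
      using LIMSEQ_subseq_LIMSEQ[OF _ r] by (simp add: S_def o_def)
    with elim(2) show "l x = F x" by (rule LIMSEQ_unique)
  qed
  with mem_AE_cong[OF l F] have FX: "F \<in> X" and NF: "N F = N l" by auto
  have "N l \<le> suminf b + N (\<lambda>x. S n x - l x)" for n
  proof -
    have "N l \<le> N (S n) + N (\<lambda>x. l x - S n x)"
      using N_triangle[OF SX[of n] diff_mem[OF l SX[of n]]] by simp
    then show ?thesis using NS[of n] N_diff_commute[OF SX l, of n] by linarith
  qed
  moreover have "(\<lambda>n. suminf b + N (\<lambda>x. S n x - l x)) \<longlonglongrightarrow> suminf b"
    using tendsto_add[OF tendsto_const Sl] by simp
  ultimately have "N l \<le> suminf b"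
    by (intro LIMSEQ_le_const[where X = "\<lambda>n. suminf b + N (\<lambda>x. S n x - l x)"]) auto
  with FX NF show ?thesis by simp
qed

lemma mult_lt_one_mem:
  assumes g: "g \<in> X" and \<psi>: "\<psi> \<in> borel_measurable M"
    and range: "\<And>x. x \<in> space M \<Longrightarrow> 0 \<le> \<psi> x \<and> \<psi> x < 1"
  shows "(\<lambda>x. \<psi> x * g x) \<in> X \<and> N (\<lambda>x. \<psi> x * g x) \<le> N g"
proof -
  define B where "B j = {x \<in> space M. odd \<lfloor>2 ^ j * \<psi> x\<rfloor>}" for j :: nat
  have B: "B j \<in> sets M" for j unfolding B_def using \<psi> by measurable
  define u where "u k = (\<lambda>x. (1/2) ^ Suc k * (indicator (B (Suc k)) x * g x))" for k
  have u: "u k \<in> X" for k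
    unfolding u_def by (intro mult_mem indicator_mult_mem[OF g B, THEN conjunct1])
  have Nu: "N (u k) \<le> N g * (1/2) ^ Suc k" for k
    using N_mult[OF indicator_mult_mem[OF g B, THEN conjunct1], of "(1/2) ^ Suc k" "Suc k"]
      indicator_mult_mem[OF g B, THEN conjunct2, of "Suc k"]
    by (simp add: u_def mult.commute)
  have sums: "(\<lambda>k. N g * (1/2) ^ Suc k) sums N g"
    using sums_mult[OF power_half_series, of "N g"] by simp
  have "AE x in M. (\<lambda>n. \<Sum>k<n. u k x) \<longlonglongrightarrow> \<psi> x * g x"
  proof (rule AE_I2)
    fix x assume x: "x \<in> space M"
    have "(\<lambda>n. \<Sum>k<n. u k x) = (\<lambda>n. real_of_int \<lfloor>2 ^ n * \<psi> x\<rfloor> / 2 ^ n * g x)"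
    proof
      fix n
      have "(\<Sum>k<n. u k x) = (\<Sum>k<n. of_bool (odd \<lfloor>2 ^ Suc k * \<psi> x\<rfloor>) / 2 ^ Suc k) * g x"
        unfolding sum_distrib_right
        by (intro sum.cong) (auto simp: u_def B_def x power_one_over)
      then show "(\<Sum>k<n. u k x) = real_of_int \<lfloor>2 ^ n * \<psi> x\<rfloor> / 2 ^ n * g x"
        using binary_digits_sum[OF range[OF x, THEN conjunct1] range[OF x, THEN conjunct2]]
        by simp
    qed
    then show "(\<lambda>n. \<Sum>k<n. u k x) \<longlonglongrightarrow> \<psi> x * g x"
      by (simp only: tendsto_mult_right dyadic_floor_tendsto)
  qed
  moreover have "(\<lambda>x. \<psi> x * g x) \<in> borel_measurable M"
    using \<psi> mem_measurable[OF g] by measurable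
  ultimately show ?thesis
    using series_mem_N_le[OF u Nu sums_summable[OF sums]] sums_unique[OF sums] by simp
qed

lemma mult_unit_interval_mem:
  assumes g: "g \<in> X" and \<phi>: "\<phi> \<in> borel_measurable M"
    and range: "\<And>x. x \<in> space M \<Longrightarrow> 0 \<le> \<phi> x \<and> \<phi> x \<le> 1"
  shows "(\<lambda>x. \<phi> x * g x) \<in> X \<and> N (\<lambda>x. \<phi> x * g x) \<le> N g"
proof -
  have "(\<lambda>x. \<phi> x / 2 * g x) \<in> X"
  proof (rule mult_lt_one_mem[OF g, THEN conjunct1])
    show "(\<lambda>x. \<phi> x / 2) \<in> borel_measurable M" using \<phi> by measurable
  qed (use range in fastforce)
  from mult_mem[OF this, of 2] have mem: "(\<lambda>x. \<phi> x * g x) \<in> X" by simp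
  have "z * N (\<lambda>x. \<phi> x * g x) \<le> N g" if z: "0 < z" "z < 1" for z
  proof -
    have "z * N (\<lambda>x. \<phi> x * g x) = N (\<lambda>x. (z * \<phi> x) * g x)"
      using N_mult[OF mem, of z] z by (simp add: mult.assoc)
    also have "\<dots> \<le> N g"
    proof (rule mult_lt_one_mem[THEN conjunct2, OF g])
      show "(\<lambda>x. z * \<phi> x) \<in> borel_measurable M" using \<phi> by measurable
      fix x assume x: "x \<in> space M"
      have "z * \<phi> x \<le> z * 1" using range[OF x] z by (intro mult_left_mono) auto
      then have "z * \<phi> x < 1" using z by linarith
      moreover have "0 \<le> z * \<phi> x" using range[OF x] z by simp
      ultimately show "0 \<le> z * \<phi> x \<and> z * \<phi> x < 1" by simp
    qed
    finally show ?thesis .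
  qed
  with mem show ?thesis by (simp add: field_le_mult_one_interval)
qed

lemma mult_unit_interval_AE_mem:
  assumes g: "g \<in> X" and \<phi>: "\<phi> \<in> borel_measurable M"
    and range: "AE x in M. 0 \<le> \<phi> x \<and> \<phi> x \<le> 1"
  shows "(\<lambda>x. \<phi> x * g x) \<in> X \<and> N (\<lambda>x. \<phi> x * g x) \<le> N g"
proof -
  define \<phi>' where "\<phi>' x = max 0 (min 1 (\<phi> x))" for x
  have "\<phi>' \<in> borel_measurable M" unfolding \<phi>'_def using \<phi> by measurable
  then have "(\<lambda>x. \<phi>' x * g x) \<in> X \<and> N (\<lambda>x. \<phi>' x * g x) \<le> N g"
    by (rule mult_unit_interval_mem[OF g]) (auto simp: \<phi>'_def)
  moreover have "AE x in M. \<phi>' x * g x = \<phi> x * g x"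
    using range by eventually_elim (auto simp: \<phi>'_def)
  moreover have "(\<lambda>x. \<phi> x * g x) \<in> borel_measurable M"
    using \<phi> mem_measurable[OF g] by measurable
  ultimately show ?thesis using mem_AE_cong[of "\<lambda>x. \<phi>' x * g x"] by auto
qed

lemma nonneg_le_dominated:
  assumes f: "f \<in> borel_measurable M" and g: "g \<in> X"
    and le: "AE x in M. 0 \<le> f x \<and> f x \<le> g x"
  shows "f \<in> X \<and> N f \<le> N g"
proof -
  define \<phi> where "\<phi> x = (if g x = 0 then 0 else f x / g x)" for x
  have "\<phi> \<in> borel_measurable M" unfolding \<phi>_def using f mem_measurable[OF g] by measurable
  moreover have "AE x in M. 0 \<le> \<phi> x \<and> \<phi> x \<le> 1" using le by eventually_elim (auto simp: \<phi>_def)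
  ultimately have "(\<lambda>x. \<phi> x * g x) \<in> X \<and> N (\<lambda>x. \<phi> x * g x) \<le> N g"
    by (rule mult_unit_interval_AE_mem[OF g])
  moreover have "AE x in M. \<phi> x * g x = f x" using le by eventually_elim (auto simp: \<phi>_def)
  ultimately show ?thesis using mem_AE_cong[of "\<lambda>x. \<phi> x * g x" f] f by auto
qed

lemma abs_le_dominated:
  assumes f: "f \<in> borel_measurable M" and g: "g \<in> X"
    and le: "AE x in M. \<bar>f x\<bar> \<le> \<bar>g x\<bar>"
  shows "f \<in> X \<and> N f \<le> 2 * N g"
proof -
  define \<phi> where "\<phi> x = (if g x = 0 then 0 else f x / g x)" for x
  have \<phi>: "\<phi> \<in> borel_measurable M" unfolding \<phi>_def using f mem_measurable[OF g] by measurable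
  have bound: "AE x in M. \<bar>\<phi> x\<bar> \<le> 1" using le by eventually_elim (auto simp: \<phi>_def abs_divide)
  have "AE x in M. 0 \<le> max (\<phi> x) 0 \<and> max (\<phi> x) 0 \<le> 1" using bound by eventually_elim auto
  from mult_unit_interval_AE_mem[OF g _ this] \<phi>
  have pos: "(\<lambda>x. max (\<phi> x) 0 * g x) \<in> X" "N (\<lambda>x. max (\<phi> x) 0 * g x) \<le> N g" by auto
  have "AE x in M. 0 \<le> max (- \<phi> x) 0 \<and> max (- \<phi> x) 0 \<le> 1" using bound by eventually_elim auto
  from mult_unit_interval_AE_mem[OF g _ this] \<phi>
  have neg: "(\<lambda>x. max (- \<phi> x) 0 * g x) \<in> X" "N (\<lambda>x. max (- \<phi> x) 0 * g x) \<le> N g" by auto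
  let ?h = "\<lambda>x. max (\<phi> x) 0 * g x - max (- \<phi> x) 0 * g x"
  have "?h \<in> X" "N ?h \<le> 2 * N g"
    using diff_mem[OF pos(1) neg(1)] N_diff_le[OF pos(1) neg(1)] pos(2) neg(2) by auto
  moreover have "AE x in M. ?h x = f x"
    using le by eventually_elim (auto simp: \<phi>_def max_def field_simps)
  ultimately show ?thesis using mem_AE_cong[of ?h f] f by auto
qed

lemma ideal: "ideal_L0 M X"
  unfolding ideal_L0_def using abs_le_dominated by blast

lemma abs_mem:
  assumes f: "f \<in> X"
  shows "(\<lambda>x. \<bar>f x\<bar>) \<in> X \<and> N (\<lambda>x. \<bar>f x\<bar>) \<le> 2 * N f"
proof (rule abs_le_dominated[OF _ f])
  show "(\<lambda>x. \<bar>f x\<bar>) \<in> borel_measurable M" using mem_measurable[OF f] by measurable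
qed simp

lemma N_le_abs:
  assumes f: "f \<in> X"
  shows "N f \<le> 2 * N (\<lambda>x. \<bar>f x\<bar>)"
  using abs_le_dominated[OF mem_measurable[OF f] abs_mem[OF f, THEN conjunct1]] by simp

lemma Linf_mult_mem:
  assumes h: "h \<in> Linf M" and f: "f \<in> X"
  shows "(\<lambda>x. h x * f x) \<in> X \<and>
    N (\<lambda>x. \<bar>h x * f x\<bar>) \<le> Linf_norm M h * N (\<lambda>x. \<bar>f x\<bar>) \<and>
    N (\<lambda>x. h x * f x) \<le> 4 * Linf_norm M h * N f"
proof -
  let ?c = "Linf_norm M h"
  have h_meas: "h \<in> borel_measurable M" and c: "0 \<le> ?c" and bound: "AE x in M. \<bar>h x\<bar> \<le> ?c"
    using Linf_AE_abs_le[OF h] by auto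
  have hf_meas: "(\<lambda>x. h x * f x) \<in> borel_measurable M" "(\<lambda>x. \<bar>h x * f x\<bar>) \<in> borel_measurable M"
    using h_meas mem_measurable[OF f] by measurable
  have "AE x in M. \<bar>h x * f x\<bar> \<le> \<bar>?c * f x\<bar>"
    using bound by eventually_elim (simp add: abs_mult c mult_right_mono)
  from abs_le_dominated[OF hf_meas(1) mult_mem[OF f] this]
  have hf: "(\<lambda>x. h x * f x) \<in> X" and "N (\<lambda>x. h x * f x) \<le> 2 * N (\<lambda>x. ?c * f x)"
    by simp_all
  then have "N (\<lambda>x. h x * f x) \<le> 2 * (?c * N f)"
    using N_mult[OF f, of ?c] c by simp
  also have "\<dots> \<le> 4 * (?c * N f)"
    using mult_nonneg_nonneg[OF N_nonneg[OF f] c] by simp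
  finally have hf_le: "N (\<lambda>x. h x * f x) \<le> 4 * ?c * N f"
    by (simp add: mult.assoc)
  have "AE x in M. 0 \<le> \<bar>h x * f x\<bar> \<and> \<bar>h x * f x\<bar> \<le> ?c * \<bar>f x\<bar>"
    using bound by eventually_elim (simp add: abs_mult mult_right_mono)
  from nonneg_le_dominated[OF hf_meas(2) mult_mem[OF abs_mem[OF f, THEN conjunct1]] this]
  have "N (\<lambda>x. \<bar>h x * f x\<bar>) \<le> ?c * N (\<lambda>x. \<bar>f x\<bar>)"
    using N_mult[OF abs_mem[OF f, THEN conjunct1], of ?c] c by simp
  with hf hf_le show ?thesis by simp
qed

lemma N_abs_diff_le: "g \<in> X \<Longrightarrow> h \<in> X \<Longrightarrow> N (\<lambda>x. \<bar>g x\<bar> - \<bar>h x\<bar>) \<le> 2 * N (\<lambda>x. g x - h x)"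
proof (rule abs_le_dominated[THEN conjunct2, OF _ diff_mem])
  assume "g \<in> X" "h \<in> X"
  then show "(\<lambda>x. \<bar>g x\<bar> - \<bar>h x\<bar>) \<in> borel_measurable M"
    using mem_measurable by measurable
qed (auto simp: abs_triangle_ineq3)

lemma N_abs_diff_le_monotone_constant:
  assumes C: "C > 0"
    and mono: "\<forall>f\<in>X. \<forall>g\<in>X. (AE x in M. 0 \<le> f x \<and> f x \<le> g x) \<longrightarrow> N f \<le> C * N g"
    and g: "g \<in> X" and h: "h \<in> X"
  shows "N (\<lambda>x. \<bar>g x\<bar> - \<bar>h x\<bar>) \<le> 4 * C * N (\<lambda>x. g x - h x)"
proof -
  have gh: "(\<lambda>x. \<bar>g x\<bar> - \<bar>h x\<bar>) \<in> X" "(\<lambda>x. g x - h x) \<in> X"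
    using diff_mem abs_mem g h by auto
  have "N (\<lambda>x. \<bar>g x\<bar> - \<bar>h x\<bar>) \<le> 2 * N (\<lambda>x. \<bar>\<bar>g x\<bar> - \<bar>h x\<bar>\<bar>)"
    by (rule N_le_abs[OF gh(1)])
  also have "\<dots> \<le> 2 * (C * N (\<lambda>x. \<bar>g x - h x\<bar>))"
    using mono abs_mem[OF gh(1)] abs_mem[OF gh(2)] by (simp add: abs_triangle_ineq3)
  also have "\<dots> \<le> 2 * (C * (2 * N (\<lambda>x. g x - h x)))"
    using abs_mem[OF gh(2)] C by simp
  finally show ?thesis by simp
qed

lemma abs_continuous:
  assumes "f \<in> X" and "e > 0"
  shows "\<exists>d>0. \<forall>g\<in>X. N (\<lambda>x. g x - f x) < d \<longrightarrow> N (\<lambda>x. \<bar>g x\<bar> - \<bar>f x\<bar>) < e"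
proof (intro exI conjI ballI impI)
  show "0 < e / 2" using \<open>e > 0\<close> by simp
  fix g assume "g \<in> X" and "N (\<lambda>x. g x - f x) < e / 2"
  with N_abs_diff_le[OF \<open>g \<in> X\<close> \<open>f \<in> X\<close>] show "N (\<lambda>x. \<bar>g x\<bar> - \<bar>f x\<bar>) < e" by linarith
qed

lemma abs_norm: "is_norm_on M X (\<lambda>f. N (\<lambda>x. \<bar>f x\<bar>))"
  unfolding is_norm_on_def
proof (intro conjI ballI allI)
  fix f assume f: "f \<in> X"
  then have af: "(\<lambda>x. \<bar>f x\<bar>) \<in> X" using abs_mem by blast
  show "0 \<le> N (\<lambda>x. \<bar>f x\<bar>)" by (rule N_nonneg[OF af])
  show "N (\<lambda>x. \<bar>f x\<bar>) = 0 \<longleftrightarrow> (AE x in M. f x = 0)" using N_eq_0_iff[OF af] by simp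
  fix c :: real
  show "N (\<lambda>x. \<bar>c * f x\<bar>) = \<bar>c\<bar> * N (\<lambda>x. \<bar>f x\<bar>)"
    using N_mult[OF af, of "\<bar>c\<bar>"] by (simp add: abs_mult)
next
  fix f g assume f: "f \<in> X" and g: "g \<in> X"
  then have af: "(\<lambda>x. \<bar>f x\<bar>) \<in> X" and ag: "(\<lambda>x. \<bar>g x\<bar>) \<in> X" using abs_mem by blast+
  have "N (\<lambda>x. \<bar>f x + g x\<bar>) \<le> N (\<lambda>x. \<bar>f x\<bar> + \<bar>g x\<bar>)"
    using nonneg_le_dominated[OF _ add_mem[OF af ag]] mem_measurable[OF f] mem_measurable[OF g]
    by (simp add: abs_triangle_ineq)
  also have "\<dots> \<le> N (\<lambda>x. \<bar>f x\<bar>) + N (\<lambda>x. \<bar>g x\<bar>)" by (rule N_triangle[OF af ag])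
  finally show "N (\<lambda>x. \<bar>f x + g x\<bar>) \<le> N (\<lambda>x. \<bar>f x\<bar>) + N (\<lambda>x. \<bar>g x\<bar>)" .
qed

lemma abs_norm_eq_nonneg:
  assumes f: "f \<in> X" and nonneg: "AE x in M. 0 \<le> f x"
  shows "N (\<lambda>x. \<bar>f x\<bar>) = N f"
proof -
  have "(\<lambda>x. \<bar>f x\<bar>) \<in> borel_measurable M" using mem_measurable[OF f] by measurable
  moreover have "AE x in M. f x = \<bar>f x\<bar>" using nonneg by auto
  ultimately show ?thesis using mem_AE_cong[OF f] by blast
qed

lemma abs_norm_complete: "complete_wrt X (\<lambda>f. N (\<lambda>x. \<bar>f x\<bar>))"
  unfolding complete_wrt_def
proof (intro allI impI, elim conjE)
  fix s :: "nat \<Rightarrow> 'a \<Rightarrow> real"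
  assume s: "\<forall>n. s n \<in> X" and Cauchy: "\<forall>e>0. \<exists>K. \<forall>m\<ge>K. \<forall>n\<ge>K. N (\<lambda>x. \<bar>s m x - s n x\<bar>) < e"
  have "\<forall>e>0. \<exists>K. \<forall>m\<ge>K. \<forall>n\<ge>K. N (\<lambda>x. s m x - s n x) < e"
  proof (intro allI impI)
    fix e :: real assume "e > 0"
    then obtain K where K: "\<forall>m\<ge>K. \<forall>n\<ge>K. N (\<lambda>x. \<bar>s m x - s n x\<bar>) < e / 2"
      using Cauchy half_gt_zero by blast
    show "\<exists>K. \<forall>m\<ge>K. \<forall>n\<ge>K. N (\<lambda>x. s m x - s n x) < e"
    proof (intro exI allI impI)
      fix m n assume "K \<le> m" "K \<le> n"
      with K have "N (\<lambda>x. \<bar>s m x - s n x\<bar>) < e / 2" by blast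
      moreover have "N (\<lambda>x. s m x - s n x) \<le> 2 * N (\<lambda>x. \<bar>s m x - s n x\<bar>)"
        using N_le_abs diff_mem s by blast
      ultimately show "N (\<lambda>x. s m x - s n x) < e" by linarith
    qed
  qed
  then obtain f where f: "f \<in> X" and lim: "(\<lambda>n. N (\<lambda>x. s n x - f x)) \<longlonglongrightarrow> 0"
    using complete s unfolding complete_wrt_def by blast
  have "(\<lambda>n. N (\<lambda>x. \<bar>s n x - f x\<bar>)) \<longlonglongrightarrow> 0"
  proof (rule Lim_null_comparison)
    show "\<forall>\<^sub>F n in sequentially. norm (N (\<lambda>x. \<bar>s n x - f x\<bar>)) \<le> 2 * N (\<lambda>x. s n x - f x)"
      using abs_mem[OF diff_mem[OF _ f]] N_nonneg[OF abs_mem[OF diff_mem[OF _ f], THEN conjunct1]] s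
      by auto
    show "(\<lambda>n. 2 * N (\<lambda>x. s n x - f x)) \<longlonglongrightarrow> 0"
      using tendsto_mult_right_zero[OF lim, of 2] by simp
  qed
  with f show "\<exists>f\<in>X. (\<lambda>n. N (\<lambda>x. \<bar>s n x - f x\<bar>)) \<longlonglongrightarrow> 0" by blast
qed

lemma abs_norm_ae_compatible: "ae_compatible M X (\<lambda>f. N (\<lambda>x. \<bar>f x\<bar>))"
  unfolding ae_compatible_def
proof (intro conjI allI impI)
  show "X \<subseteq> borel_measurable M" using mem_measurable by blast
  fix f g assume "f \<in> X \<and> g \<in> borel_measurable M \<and> (AE x in M. f x = g x)"
  then have f: "f \<in> X" and g: "g \<in> borel_measurable M" and fg: "AE x in M. f x = g x" by auto
  show "g \<in> X" by (rule mem_AE_cong[OF f g fg, THEN conjunct1])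
  have "(\<lambda>x. \<bar>g x\<bar>) \<in> borel_measurable M" using g by measurable
  moreover have "AE x in M. \<bar>f x\<bar> = \<bar>g x\<bar>" using fg by auto
  ultimately show "N (\<lambda>x. \<bar>g x\<bar>) = N (\<lambda>x. \<bar>f x\<bar>)"
    using mem_AE_cong[OF abs_mem[OF f, THEN conjunct1]] by blast
qed

lemma abs_norm_riesz: "riesz_norm M X (\<lambda>f. N (\<lambda>x. \<bar>f x\<bar>))"
  unfolding riesz_norm_def
proof (intro ballI impI)
  fix f g assume f: "f \<in> X" and g: "g \<in> X" and le: "AE x in M. \<bar>f x\<bar> \<le> \<bar>g x\<bar>"
  have "(\<lambda>x. \<bar>f x\<bar>) \<in> borel_measurable M" using mem_measurable[OF f] by measurable
  moreover have "AE x in M. 0 \<le> \<bar>f x\<bar> \<and> \<bar>f x\<bar> \<le> \<bar>g x\<bar>" using le by auto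
  ultimately show "N (\<lambda>x. \<bar>f x\<bar>) \<le> N (\<lambda>x. \<bar>g x\<bar>)"
    using nonneg_le_dominated[OF _ abs_mem[OF g, THEN conjunct1]] by blast
qed

lemma banach_function_space_abs_norm: "banach_function_space M X (\<lambda>f. N (\<lambda>x. \<bar>f x\<bar>))"
proof -
  have "vector_subspace_L0 M X"
    using strictly_rectangular unfolding banach_strictly_rectangular_def banach_subspace_L0_def by blast
  then show ?thesis
    unfolding banach_function_space_def banach_subspace_L0_def
    using abs_norm_ae_compatible abs_norm abs_norm_complete ideal abs_norm_riesz by blast
qed

end

theorem theorem3p7:
  fixes M :: "'a measure" and X :: "('a \<Rightarrow> real) set" and N :: "('a \<Rightarrow> real) \<Rightarrow> real"
  assumes "finite_measure M"
    and "banach_strictly_rectangular M X N"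
    and "subsequence_property M X N"
  shows
    \<comment> \<open>(i)\<close>
    "(\<forall>h f. h \<in> Linf M \<and> f \<in> X \<longrightarrow>
        (\<lambda>x. h x * f x) \<in> X \<and>
        N (\<lambda>x. \<bar>h x * f x\<bar>) \<le> Linf_norm M h * N (\<lambda>x. \<bar>f x\<bar>) \<and>
        N (\<lambda>x. h x * f x) \<le> 4 * Linf_norm M h * N f)
   \<and> \<comment> \<open>(ii)\<close>
    ideal_L0 M X
   \<and> \<comment> \<open>(iii)\<close>
    (\<exists>C>0. \<forall>f\<in>X. \<forall>g\<in>X. (AE x in M. 0 \<le> f x \<and> f x \<le> g x) \<longrightarrow> N f \<le> C * N g)
   \<and> (\<forall>C>0. (\<forall>f\<in>X. \<forall>g\<in>X. (AE x in M. 0 \<le> f x \<and> f x \<le> g x) \<longrightarrow> N f \<le> C * N g) \<longrightarrow>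
        (\<forall>g\<in>X. \<forall>h\<in>X. N (\<lambda>x. \<bar>g x\<bar> - \<bar>h x\<bar>) \<le> 4 * C * N (\<lambda>x. g x - h x)))
   \<and> (\<forall>f\<in>X. \<forall>e>0. \<exists>d>0. \<forall>g\<in>X. N (\<lambda>x. g x - f x) < d \<longrightarrow> N (\<lambda>x. \<bar>g x\<bar> - \<bar>f x\<bar>) < e)
   \<and> \<comment> \<open>(iv)\<close>
    is_norm_on M X (\<lambda>f. N (\<lambda>x. \<bar>f x\<bar>))
   \<and> (\<exists>a>0. \<exists>b>0. \<forall>f\<in>X. a * N f \<le> N (\<lambda>x. \<bar>f x\<bar>) \<and> N (\<lambda>x. \<bar>f x\<bar>) \<le> b * N f)
   \<and> (\<forall>f\<in>X. (AE x in M. 0 \<le> f x) \<longrightarrow> N (\<lambda>x. \<bar>f x\<bar>) = N f)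
   \<and> banach_function_space M X (\<lambda>f. N (\<lambda>x. \<bar>f x\<bar>))"
proof -
  interpret strictly_rectangular_space M X N using assms(2,3) by unfold_locales
  have monotone: "\<exists>C>0. \<forall>f\<in>X. \<forall>g\<in>X. (AE x in M. 0 \<le> f x \<and> f x \<le> g x) \<longrightarrow> N f \<le> C * N g"
    by (intro exI[of _ 1]) (auto dest: nonneg_le_dominated[OF mem_measurable])
  have equivalent:
    "\<exists>a>0. \<exists>b>0. \<forall>f\<in>X. a * N f \<le> N (\<lambda>x. \<bar>f x\<bar>) \<and> N (\<lambda>x. \<bar>f x\<bar>) \<le> b * N f"
    by (rule exI[of _ "1/2"], rule conjI, simp, rule exI[of _ 2]) (auto dest: N_le_abs abs_mem)
  show ?thesis
    using Linf_mult_mem ideal monotone N_abs_diff_le_monotone_constant abs_continuous abs_norm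
      equivalent abs_norm_eq_nonneg banach_function_space_abs_norm
    by (intro conjI) blast+
qed

end
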